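(* Let $(X,\mathcal{O}(X))$ be a measurable space, $\mathcal{A}$ a unital $C^*$-algebra and $\mathcal{H}$ a Hilbert space. Every spectral instrument $\mathcal{I}:\mathcal{O}(X)\to CP(\mathcal{A},\mathcal{B}(\mathcal{H}))$ is an extreme point of the convex set $I_{\mathcal{H}}(X,\mathcal{A})$.
   Context: A CP instrument is a map $\mathcal{I}$ from $\mathcal{O}(X)$ to the completely positive maps $\mathcal{A}\to\mathcal{B}(\mathcal{H})$ such that for all $a\in\mathcal{A}$, $h,k\in\mathcal{H}$, $A\mapsto\langle h,\mathcal{I}(A)(a)k\rangle$ is a countably additive complex measure. It is UCP if $\mathcal{I}(X)(1_\mathcal{A})=I_\mathcal{H}$; $I_{\mathcal{H}}(X,\mathcal{A})$ is the convex set of UCP instruments. It is spectral if it is UCP and $\mathcal{I}(A)$ is a $*$-homomorphism for every $A\in\mathcal{O}(X)$. *)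

theory Defs
  imports "HOL-Analysis.Analysis"
begin

locale complex_hilbert =
  fixes sH :: "complex \<Rightarrow> 'h::ab_group_add \<Rightarrow> 'h"
    and ip :: "'h \<Rightarrow> 'h \<Rightarrow> complex"
  assumes sH_add_right: "sH c (x + y) = sH c x + sH c y"
    and sH_add_left: "sH (c + d) x = sH c x + sH d x"
    and sH_assoc: "sH c (sH d x) = sH (c * d) x"
    and sH_one: "sH 1 x = x"
    and inner_add_right: "ip x (y + z) = ip x y + ip x z"
    and inner_smult_right: "ip x (sH c y) = c * ip x y"
    and inner_cnj_sym: "ip y x = cnj (ip x y)"
    and inner_self_nonneg: "0 \<le> Re (ip x x)"
    and inner_self_zero: "ip x x = 0 \<Longrightarrow> x = 0"
    and complete: "(\<forall>e>0. \<exists>N. \<forall>m\<ge>N. \<forall>n\<ge>N.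
                      sqrt (Re (ip (X m - X n) (X m - X n))) < e)
                   \<Longrightarrow> \<exists>L. (\<lambda>n. sqrt (Re (ip (X n - L) (X n - L)))) \<longlonglongrightarrow> 0"

definition hnorm :: "('h \<Rightarrow> 'h \<Rightarrow> complex) \<Rightarrow> 'h \<Rightarrow> real" where
  "hnorm ip x = sqrt (Re (ip x x))"

locale unital_cstar_algebra =
  fixes sA :: "complex \<Rightarrow> 'a::{ring, monoid_mult} \<Rightarrow> 'a"
    and star :: "'a \<Rightarrow> 'a"
    and anorm :: "'a \<Rightarrow> real"
  assumes sA_add_right: "sA c (x + y) = sA c x + sA c y"
    and sA_add_left: "sA (c + d) x = sA c x + sA d x"
    and sA_assoc: "sA c (sA d x) = sA (c * d) x"
    and sA_one: "sA 1 x = x"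
    and sA_mult_left: "sA c x * y = sA c (x * y)"
    and sA_mult_right: "x * sA c y = sA c (x * y)"
    and star_star: "star (star x) = x"
    and star_add: "star (x + y) = star x + star y"
    and star_mult: "star (x * y) = star y * star x"
    and star_smult: "star (sA c x) = sA (cnj c) (star x)"
    and anorm_nonneg: "0 \<le> anorm x"
    and anorm_zero: "anorm x = 0 \<longleftrightarrow> x = 0"
    and anorm_triangle: "anorm (x + y) \<le> anorm x + anorm y"
    and anorm_smult: "anorm (sA c x) = cmod c * anorm x"
    and anorm_mult: "anorm (x * y) \<le> anorm x * anorm y"
    and cstar_identity: "anorm (star x * x) = (anorm x)\<^sup>2"
    and complete: "(\<forall>e>0. \<exists>N. \<forall>m\<ge>N. \<forall>n\<ge>N. anorm (X m - X n) < e)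
                   \<Longrightarrow> \<exists>L. (\<lambda>n. anorm (X n - L)) \<longlonglongrightarrow> 0"

definition bounded_op :: "(complex \<Rightarrow> 'h::ab_group_add \<Rightarrow> 'h) \<Rightarrow> ('h \<Rightarrow> 'h \<Rightarrow> complex)
    \<Rightarrow> ('h \<Rightarrow> 'h) \<Rightarrow> bool" where
  "bounded_op sH ip T \<longleftrightarrow>
     (\<forall>x y. T (x + y) = T x + T y) \<and> (\<forall>c x. T (sH c x) = sH c (T x)) \<and>
     (\<exists>K. \<forall>x. hnorm ip (T x) \<le> K * hnorm ip x)"

text \<open>A linear map phi from A to B(H) is completely positive if for every n, the
  amplification phi_n maps positive elements of M_n(A) (= elements of the form Y* Y)
  to positive operators on H^n.\<close>
definition cp_map :: "(complex \<Rightarrow> 'a::{ring, monoid_mult} \<Rightarrow> 'a) \<Rightarrow> ('a \<Rightarrow> 'a)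
    \<Rightarrow> (complex \<Rightarrow> 'h::ab_group_add \<Rightarrow> 'h) \<Rightarrow> ('h \<Rightarrow> 'h \<Rightarrow> complex)
    \<Rightarrow> ('a \<Rightarrow> 'h \<Rightarrow> 'h) \<Rightarrow> bool" where
  "cp_map sA star sH ip \<phi> \<longleftrightarrow>
     (\<forall>a b. \<phi> (a + b) = (\<lambda>h. \<phi> a h + \<phi> b h)) \<and>
     (\<forall>c a. \<phi> (sA c a) = (\<lambda>h. sH c (\<phi> a h))) \<and>
     (\<forall>a. bounded_op sH ip (\<phi> a)) \<and>
     (\<forall>(n::nat) (Y::nat \<Rightarrow> nat \<Rightarrow> 'a) (h::nat \<Rightarrow> 'h).
        let s = (\<Sum>i<n. \<Sum>j<n. ip (h i) (\<phi> (\<Sum>k<n. star (Y k i) * Y k j) (h j)))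
        in Im s = 0 \<and> 0 \<le> Re s)"

text \<open>An instrument is a map on the measurable sets; outside sets M it is fixed to 0
  (extensionality convention).\<close>
definition cp_instrument :: "'x measure \<Rightarrow> (complex \<Rightarrow> 'a::{ring, monoid_mult} \<Rightarrow> 'a)
    \<Rightarrow> ('a \<Rightarrow> 'a) \<Rightarrow> (complex \<Rightarrow> 'h::ab_group_add \<Rightarrow> 'h) \<Rightarrow> ('h \<Rightarrow> 'h \<Rightarrow> complex)
    \<Rightarrow> ('x set \<Rightarrow> 'a \<Rightarrow> 'h \<Rightarrow> 'h) \<Rightarrow> bool" where
  "cp_instrument M sA star sH ip I \<longleftrightarrow>
     (\<forall>A\<in>sets M. cp_map sA star sH ip (I A)) \<and>
     (\<forall>A. A \<notin> sets M \<longrightarrow> I A = (\<lambda>a h. 0)) \<and>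
     (\<forall>a h k F. range F \<subseteq> sets M \<longrightarrow> disjoint_family F \<longrightarrow>
        (\<lambda>n. ip h (I (F n) a k)) sums ip h (I (\<Union>(range F)) a k))"

definition ucp_instruments :: "'x measure \<Rightarrow> (complex \<Rightarrow> 'a::{ring, monoid_mult} \<Rightarrow> 'a)
    \<Rightarrow> ('a \<Rightarrow> 'a) \<Rightarrow> (complex \<Rightarrow> 'h::ab_group_add \<Rightarrow> 'h) \<Rightarrow> ('h \<Rightarrow> 'h \<Rightarrow> complex)
    \<Rightarrow> ('x set \<Rightarrow> 'a \<Rightarrow> 'h \<Rightarrow> 'h) set" where
  "ucp_instruments M sA star sH ip =
     {I. cp_instrument M sA star sH ip I \<and> I (space M) 1 = id}"

definition spectral_instrument :: "'x measure \<Rightarrow> (complex \<Rightarrow> 'a::{ring, monoid_mult} \<Rightarrow> 'a)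
    \<Rightarrow> ('a \<Rightarrow> 'a) \<Rightarrow> (complex \<Rightarrow> 'h::ab_group_add \<Rightarrow> 'h) \<Rightarrow> ('h \<Rightarrow> 'h \<Rightarrow> complex)
    \<Rightarrow> ('x set \<Rightarrow> 'a \<Rightarrow> 'h \<Rightarrow> 'h) \<Rightarrow> bool" where
  "spectral_instrument M sA star sH ip I \<longleftrightarrow>
     I \<in> ucp_instruments M sA star sH ip \<and>
     (\<forall>A\<in>sets M. (\<forall>a b. I A (a * b) = I A a \<circ> I A b) \<and>
                 (\<forall>a h k. ip h (I A (star a) k) = ip (I A a h) k))"

definition extreme_point_instr :: "(complex \<Rightarrow> 'h::ab_group_add \<Rightarrow> 'h)
    \<Rightarrow> ('x set \<Rightarrow> 'a \<Rightarrow> 'h \<Rightarrow> 'h) set \<Rightarrow> ('x set \<Rightarrow> 'a \<Rightarrow> 'h \<Rightarrow> 'h) \<Rightarrow> bool" where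
  "extreme_point_instr sH S I \<longleftrightarrow> I \<in> S \<and>
     (\<forall>I1\<in>S. \<forall>I2\<in>S. \<forall>t::real. 0 < t \<and> t < 1 \<and>
        I = (\<lambda>A a h. sH (complex_of_real t) (I1 A a h) + sH (complex_of_real (1 - t)) (I2 A a h))
        \<longrightarrow> I1 = I \<and> I2 = I)"

end

(* Every UCP instrument is pointwise subunital, I1(B)(1) <= id, so each I1(B) satisfies the
   Kadison-Schwarz inequality ||I1(B)(a) h||^2 <= <h, I1(B)(a* a) h>; for a spectral instrument
   this is an equality.  If I = t I1 + (1 - t) I2 with 0 < t < 1, then averaging the two
   inequalities and comparing with the equality for I leaves no room in the strict convexity
   of the squared norm, so I1(B)(a) h = I2(B)(a) h = I(B)(a) h. *)
theory Submission
  imports Defs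
begin

context complex_hilbert
begin

lemma ip_zero_right [simp]: "ip x 0 = 0"
  using inner_add_right[of x 0 0] by simp

lemma ip_add_left: "ip (x + y) z = ip x z + ip y z"
  using inner_cnj_sym[of "x + y" z] inner_cnj_sym[of x z] inner_cnj_sym[of y z]
    inner_add_right[of z x y]
  by simp

lemma ip_smult_left: "ip (sH c x) y = cnj c * ip x y"
  using inner_cnj_sym[of "sH c x" y] inner_cnj_sym[of x y] inner_smult_right[of y c x]
  by simp

lemma ip_minus_right: "ip x (- y) = - ip x y"
  using inner_add_right[of x y "- y"] by (simp add: eq_neg_iff_add_eq_0 add.commute)

lemma ip_minus_left: "ip (- x) y = - ip x y"
  using inner_cnj_sym[of "- x" y] inner_cnj_sym[of x y] ip_minus_right[of y x] by simp

lemma ip_diff_right: "ip x (y - z) = ip x y - ip x z"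
  using inner_add_right[of x y "- z"] ip_minus_right[of x z] by simp

lemma ip_diff_left: "ip (x - y) z = ip x z - ip y z"
  using ip_add_left[of x "- y" z] ip_minus_left[of y z] by simp

lemma ip_self_real: "Im (ip x x) = 0"
  using inner_cnj_sym[of x x] by (metis complex_cnj_cancel_iff cnj.simps(2) neg_equal_zero)

lemma sH_convex_combination_self:
  "sH (complex_of_real t) u + sH (complex_of_real (1 - t)) u = u"
  using sH_add_left[of "complex_of_real t" "complex_of_real (1 - t)" u] sH_one[of u]
  by simp

lemma convex_combination_ip_self_ge_imp_eq:
  fixes t :: real and u v :: 'h
  defines "w \<equiv> sH (complex_of_real t) u + sH (complex_of_real (1 - t)) v"
  assumes "0 < t" "t < 1"
    and "t * Re (ip u u) + (1 - t) * Re (ip v v) \<le> Re (ip w w)"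
  shows "u = v"
proof -
  have "ip w w = t * ip u u + (1 - t) * ip v v - t * (1 - t) * ip (u - v) (u - v)"
    unfolding w_def
    by (simp add: ip_add_left inner_add_right ip_smult_left inner_smult_right
        ip_diff_left ip_diff_right algebra_simps)
  then have "t * (1 - t) * Re (ip (u - v) (u - v)) \<le> 0"
    using assms(4) by simp
  moreover have "0 < t * (1 - t)"
    using assms(2,3) by simp
  ultimately have "Re (ip (u - v) (u - v)) \<le> 0"
    by (metis mult_le_0_iff not_le)
  then have "ip (u - v) (u - v) = 0"
    using inner_self_nonneg[of "u - v"] ip_self_real[of "u - v"] by (simp add: complex_eq_iff)
  then show "u = v"
    using inner_self_zero by force
qed

end

context unital_cstar_algebra
begin

lemma star_one [simp]: "star 1 = 1"
  using star_mult[of "star 1" 1] by (simp add: star_star)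

lemma star_zero [simp]: "star 0 = 0"
  using star_add[of 0 0] by simp

end

lemma cp_map_sH_right:
  assumes "cp_map sA star sH ip \<psi>"
  shows "\<psi> a (sH c x) = sH c (\<psi> a x)"
  using assms unfolding cp_map_def bounded_op_def by blast

lemma cp_map_positive:
  assumes "cp_map sA star sH ip \<psi>"
  shows "Im (ip h (\<psi> (star y * y) h)) = 0 \<and> 0 \<le> Re (ip h (\<psi> (star y * y) h))"
  using assms unfolding cp_map_def
  by (elim conjE) (drule spec[of _ 1], drule spec[of _ "\<lambda>_ _. y"], drule spec[of _ "\<lambda>_. h"],
      simp add: Let_def)

lemma cp_map_positive_block:
  fixes a h0 h1
  assumes "unital_cstar_algebra sA star anorm" and "cp_map sA star sH ip \<psi>"
  defines "s \<equiv> ip h0 (\<psi> 1 h0) + ip h0 (\<psi> a h1) + ip h1 (\<psi> (star a) h0)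
                + ip h1 (\<psi> (star a * a) h1)"
  shows "Im s = 0 \<and> 0 \<le> Re s"
proof -
  interpret unital_cstar_algebra sA star anorm by fact
  \<comment> \<open>The 2 x 2 matrix [1, a; star a, star a * a] is Y* Y for Y = [1, a; 0, 0].\<close>
  define Y :: "nat \<Rightarrow> nat \<Rightarrow> 'a" where "Y = (\<lambda>k i. if k = 0 then (if i = 0 then 1 else a) else 0)"
  define h where "h = (\<lambda>i::nat. if i = 0 then h0 else h1)"
  have "let s = (\<Sum>i<2. \<Sum>j<2. ip (h i) (\<psi> (\<Sum>k<(2::nat). star (Y k i) * Y k j) (h j)))
        in Im s = 0 \<and> 0 \<le> Re s"
    using assms(2) unfolding cp_map_def
    by (elim conjE) (drule spec[of _ 2], drule spec[of _ Y], drule spec[of _ h], assumption)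
  moreover have "(\<Sum>i<2. \<Sum>j<2. ip (h i) (\<psi> (\<Sum>k<(2::nat). star (Y k i) * Y k j) (h j))) = s"
    by (simp add: s_def numeral_2_eq_2 Y_def h_def add.assoc)
  ultimately show ?thesis
    by (simp add: Let_def)
qed

lemma cp_map_kadison_schwarz:
  assumes A: "unital_cstar_algebra sA star anorm" and "complex_hilbert sH ip"
    and cp: "cp_map sA star sH ip \<psi>"
    and subunital: "\<And>x. Re (ip x (\<psi> 1 x)) \<le> Re (ip x x)"
  shows "Re (ip (\<psi> a h) (\<psi> a h)) \<le> Re (ip h (\<psi> (star a * a) h))"
proof -
  interpret complex_hilbert sH ip by fact
  interpret unital_cstar_algebra sA star anorm by fact
  define u where "u = \<psi> a h"
  define p where "p = ip u (\<psi> 1 u)"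
  define w where "w = ip h (\<psi> (star a) u)"
  define q where "q = ip h (\<psi> (star a * a) h)"
  define N where "N = ip u u"
  have "Im p = 0"
    using cp_map_positive[OF cp, of u 1] unfolding p_def by simp
  moreover have "Im q = 0"
    using cp_map_positive[OF cp, of h a] unfolding q_def by simp
  moreover have "Im N = 0"
    unfolding N_def by (rule ip_self_real)
  moreover have "Im (p - N - w + q) = 0 \<and> 0 \<le> Re (p - N - w + q)"
    using cp_map_positive_block[OF A cp, of "sH (-1) u" a h]
    by (simp add: ip_smult_left inner_smult_right cp_map_sH_right[OF cp]
        u_def[symmetric] p_def w_def q_def N_def)
  moreover have "Im (p + \<i> * N - \<i> * w + q) = 0"
    using cp_map_positive_block[OF A cp, of "sH (-\<i>) u" a h]
    by (simp add: ip_smult_left inner_smult_right cp_map_sH_right[OF cp]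
        u_def[symmetric] p_def w_def q_def N_def)
  moreover have "Re p \<le> Re N"
    using subunital[of u] unfolding p_def N_def .
  ultimately show ?thesis
    unfolding u_def[symmetric] q_def[symmetric] N_def[symmetric] by simp
qed

lemma cp_instrument_empty:
  assumes "cp_instrument M sA star sH ip J"
  shows "ip h (J {} a k) = 0"
proof -
  have "(\<lambda>n::nat. ip h (J ((\<lambda>_. {}) n) a k)) sums ip h (J (\<Union>(range (\<lambda>_::nat. {}))) a k)"
    using assms unfolding cp_instrument_def
    by (elim conjE) (drule spec[of _ a], drule spec[of _ h], drule spec[of _ k],
        drule spec[of _ "\<lambda>_::nat. {}"], simp add: disjoint_family_on_def)
  then have "(\<lambda>n::nat. ip h (J {} a k)) \<longlonglongrightarrow> 0"
    using sums_summable summable_LIMSEQ_zero by auto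
  then show ?thesis
    using LIMSEQ_unique tendsto_const by blast
qed

lemma cp_instrument_Un:
  assumes J: "cp_instrument M sA star sH ip J"
    and "A \<in> sets M" "B \<in> sets M" "A \<inter> B = {}"
  shows "ip h (J (A \<union> B) a k) = ip h (J A a k) + ip h (J B a k)"
proof -
  define F where "F = (\<lambda>n::nat. if n = 0 then A else if n = 1 then B else {})"
  have "range F \<subseteq> sets M"
    using assms unfolding F_def by auto
  moreover have "disjoint_family F"
    using assms(4) unfolding F_def disjoint_family_on_def by auto
  moreover have "\<Union>(range F) = A \<union> B"
    using rangeI[of F 0] rangeI[of F 1] unfolding F_def by (auto split: if_splits)
  ultimately have "(\<lambda>n. ip h (J (F n) a k)) sums ip h (J (A \<union> B) a k)"
    using J unfolding cp_instrument_def by metis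
  moreover have "(\<lambda>n. ip h (J (F n) a k)) sums (\<Sum>n\<in>{0,1}. ip h (J (F n) a k))"
    by (rule sums_finite) (auto simp: F_def cp_instrument_empty[OF J])
  ultimately show ?thesis
    using sums_unique2 by (fastforce simp: F_def)
qed

lemma ucp_instrument_subunital:
  assumes A: "unital_cstar_algebra sA star anorm"
    and J: "J \<in> ucp_instruments M sA star sH ip" and B: "B \<in> sets M"
  shows "Re (ip x (J B 1 x)) \<le> Re (ip x x)"
proof -
  interpret unital_cstar_algebra sA star anorm by fact
  have Jcp: "cp_instrument M sA star sH ip J" and J1: "J (space M) 1 = id"
    using J unfolding ucp_instruments_def by auto
  have C: "space M - B \<in> sets M"
    using B by auto
  have "B \<union> (space M - B) = space M"
    using B sets.sets_into_space by blast
  then have "ip x x = ip x (J B 1 x) + ip x (J (space M - B) 1 x)"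
    using cp_instrument_Un[OF Jcp B C, of x 1 x] J1 by simp
  moreover have "0 \<le> Re (ip x (J (space M - B) 1 x))"
    using cp_map_positive[of sA star sH ip "J (space M - B)" x 1] Jcp C
    unfolding cp_instrument_def by auto
  ultimately show ?thesis
    by simp
qed

lemma spectral_instrument_ip_self:
  assumes "spectral_instrument M sA star sH ip I" and "B \<in> sets M"
  shows "ip h (I B (star a * a) h) = ip (I B a h) (I B a h)"
  using assms unfolding spectral_instrument_def by simp

lemma spectral_instrument_convex_component_eq:
  fixes t :: real
  assumes A: "unital_cstar_algebra sA star anorm" and H: "complex_hilbert sH ip"
    and I: "spectral_instrument M sA star sH ip I"
    and J1: "I1 \<in> ucp_instruments M sA star sH ip"
    and J2: "I2 \<in> ucp_instruments M sA star sH ip"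
    and t: "0 < t" "t < 1"
    and decomp: "I = (\<lambda>B a h. sH (complex_of_real t) (I1 B a h) + sH (complex_of_real (1 - t)) (I2 B a h))"
  shows "I1 = I"
proof (intro ext)
  interpret complex_hilbert sH ip by fact
  fix B a h
  show "I1 B a h = I B a h"
  proof (cases "B \<in> sets M")
    case False
    then show ?thesis
      using J1 I unfolding spectral_instrument_def ucp_instruments_def cp_instrument_def by auto
  next
    case B: True
    have "Re (ip (J B a h) (J B a h)) \<le> Re (ip h (J B (star a * a) h))"
      if J: "J \<in> ucp_instruments M sA star sH ip" for J
      using J B unfolding ucp_instruments_def cp_instrument_def
      by (intro cp_map_kadison_schwarz[OF A H] ucp_instrument_subunital[OF A J B]) auto
    from this[OF J1] this[OF J2] have
      "t * Re (ip (I1 B a h) (I1 B a h)) + (1 - t) * Re (ip (I2 B a h) (I2 B a h))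
        \<le> Re (ip h (I B (star a * a) h))"
      using t by (subst decomp) (simp add: inner_add_right inner_smult_right add_mono)
    also have "\<dots> = Re (ip (I B a h) (I B a h))"
      by (simp add: spectral_instrument_ip_self[OF I B])
    finally have "I1 B a h = I2 B a h"
      unfolding decomp by (rule convex_combination_ip_self_ge_imp_eq[OF t])
    then show ?thesis
      using sH_convex_combination_self[of t "I1 B a h"] by (simp add: decomp)
  qed
qed

theorem corollary3p2:
  fixes M :: "'x measure"
    and sA :: "complex \<Rightarrow> 'a::{ring, monoid_mult} \<Rightarrow> 'a"
    and star :: "'a \<Rightarrow> 'a"
    and anorm :: "'a \<Rightarrow> real"
    and sH :: "complex \<Rightarrow> 'h::ab_group_add \<Rightarrow> 'h"
    and ip :: "'h \<Rightarrow> 'h \<Rightarrow> complex"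
    and I :: "'x set \<Rightarrow> 'a \<Rightarrow> 'h \<Rightarrow> 'h"
  assumes "unital_cstar_algebra sA star anorm"
    and "complex_hilbert sH ip"
    and "spectral_instrument M sA star sH ip I"
  shows "extreme_point_instr sH (ucp_instruments M sA star sH ip) I"
  unfolding extreme_point_instr_def
proof (intro conjI ballI allI impI)
  show "I \<in> ucp_instruments M sA star sH ip"
    using assms(3) unfolding spectral_instrument_def by blast
next
  fix I1 I2 t
  assume J1: "I1 \<in> ucp_instruments M sA star sH ip" and J2: "I2 \<in> ucp_instruments M sA star sH ip"
    and "0 < t \<and> t < 1 \<and>
      I = (\<lambda>A a h. sH (complex_of_real t) (I1 A a h) + sH (complex_of_real (1 - t)) (I2 A a h))"
  then have t: "0 < t" "t < 1"
    and decomp: "I = (\<lambda>A a h. sH (complex_of_real t) (I1 A a h) + sH (complex_of_real (1 - t)) (I2 A a h))"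
    by auto
  then have decomp': "I = (\<lambda>A a h. sH (complex_of_real (1 - t)) (I2 A a h)
                              + sH (complex_of_real (1 - (1 - t))) (I1 A a h))"
    by (simp add: add.commute)
  show "I1 = I"
    by (rule spectral_instrument_convex_component_eq[OF assms J1 J2 t decomp])
  show "I2 = I"
    using t by (intro spectral_instrument_convex_component_eq[OF assms J2 J1 _ _ decomp']) auto
qed

end
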